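(* $M(5,2,2)\le 7$.
   Context: All measures are probability measures on $\mathbb{R}^d$ absolutely continuous with respect to Lebesgue measure. A convex partition of $\mathbb{R}^d$ into $n$ parts is an ordered tuple $(K_1,\dots,K_n)$ of closed convex sets with union $\mathbb{R}^d$ and pairwise disjoint interiors (some parts may be empty). $M(n,r,d)$ is the largest integer $M$ such that for any $M$ measures $\mu_1,\dots,\mu_M$ on $\mathbb{R}^d$ there is a convex partition $(K_1,\dots,K_n)$ of $\mathbb{R}^d$ into $n$ parts and a map $\ell\colon[n]\to[r]$ with $\mu_j\big(\bigcup_{i\in\ell^{-1}(s)}K_i\big)=\tfrac1r$ for all $1\le j\le M$ and $1\le s\le r$. *)

theory Defs
  imports "HOL-Probability.Probability"
begin

definition ac_prob_measure :: "'a::euclidean_space measure \<Rightarrow> bool" where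
  "ac_prob_measure \<mu> \<longleftrightarrow> sets \<mu> = sets borel \<and> prob_space \<mu> \<and> absolutely_continuous lborel \<mu>"

definition convex_partition :: "nat \<Rightarrow> (nat \<Rightarrow> 'a::euclidean_space set) \<Rightarrow> bool" where
  "convex_partition n K \<longleftrightarrow>
     (\<forall>i<n. closed (K i) \<and> convex (K i)) \<and> (\<Union>i<n. K i) = UNIV \<and>
     (\<forall>i<n. \<forall>j<n. i \<noteq> j \<longrightarrow> interior (K i) \<inter> interior (K j) = {})"

definition equipart_prop :: "nat \<Rightarrow> nat \<Rightarrow> 'a::euclidean_space itself \<Rightarrow> nat \<Rightarrow> bool" where
  "equipart_prop n r _ m \<longleftrightarrow>
     (\<forall>\<mu> :: nat \<Rightarrow> 'a measure. (\<forall>j<m. ac_prob_measure (\<mu> j)) \<longrightarrow>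
        (\<exists>K lab. convex_partition n K \<and> (\<forall>i<n. lab i < r) \<and>
           (\<forall>j<m. \<forall>s<r. measure (\<mu> j) (\<Union>i\<in>{i. i < n \<and> lab i = s}. K i) = 1 / real r)))"

text \<open>M(n,r,d), the dimension d given by the type 'a.\<close>
definition M_val :: "nat \<Rightarrow> nat \<Rightarrow> 'a::euclidean_space itself \<Rightarrow> nat" where
  "M_val n r T = (GREATEST m. equipart_prop n r T m)"

end

theory Submission
  imports Defs
begin

text \<open>Take eight points in the plane such that for every 2-colouring of them some monochromatic
  triangle contains a further one of the points, robustly enough that the same holds for the
  small squares around the points; the measures are the uniform measures on these squares.
  In a convex partition into five parts with two classes, one class is the union of at most two
  convex parts. Each square meets that class, since the class has measure 1/2; choosing a point
  of each square in the class and colouring it by the part containing it gives a monochromatic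
  triangle lying in one convex part, which then swallows a whole square and gives it measure 1.\<close>

lemma M_val_le_if_not_equipartitioned:
  fixes \<mu> :: "nat \<Rightarrow> 'a::euclidean_space measure"
  assumes "0 < n" "0 < r" and ac: "\<And>j. ac_prob_measure (\<mu> j)"
    and not_equipartitioned: "\<not> (\<exists>K lab. convex_partition n K \<and> (\<forall>i<n. lab i < r) \<and>
      (\<forall>j<Suc b. \<forall>s<r. measure (\<mu> j) (\<Union>i\<in>{i. i < n \<and> lab i = s}. K i) = 1 / real r))"
  shows "M_val n r TYPE('a) \<le> b"
proof -
  let ?P = "equipart_prop n r TYPE('a)"
  have bound: "m \<le> b" if "?P m" for m
  proof (rule ccontr)
    assume "\<not> m \<le> b"
    then have "Suc b \<le> m" by simp
    from spec[OF that[unfolded equipart_prop_def], of \<mu>] ac obtain K lab where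
      "convex_partition n K" "\<forall>i<n. lab i < r" and equi:
      "\<forall>j<m. \<forall>s<r. measure (\<mu> j) (\<Union>i\<in>{i. i < n \<and> lab i = s}. K i) = 1 / real r"
      by blast
    moreover have "\<forall>j<Suc b. \<forall>s<r. measure (\<mu> j) (\<Union>i\<in>{i. i < n \<and> lab i = s}. K i) = 1 / real r"
      using equi \<open>Suc b \<le> m\<close> by simp
    ultimately show False
      using not_equipartitioned by blast
  qed
  have "convex_partition n (\<lambda>i. if i = 0 then UNIV else {})"
    using \<open>0 < n\<close> unfolding convex_partition_def by (auto intro!: bexI[of _ 0])
  then have "?P 0"
    using \<open>0 < r\<close> unfolding equipart_prop_def by (blast intro: exI[of _ "\<lambda>_. 0"])
  then show ?thesis
    unfolding M_val_def by (rule GreatestI_nat[OF _ bound, THEN bound])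
qed

lemma ac_prob_measure_uniform_measure:
  assumes "S \<in> sets borel" "emeasure lborel S \<noteq> 0" "emeasure lborel S \<noteq> \<infinity>"
  shows "ac_prob_measure (uniform_measure lborel S)"
  unfolding ac_prob_measure_def
proof (intro conjI)
  show "prob_space (uniform_measure lborel S)"
    using assms(2,3) by (rule prob_space_uniform_measure)
  show "absolutely_continuous lborel (uniform_measure lborel S)"
    using assms(1) unfolding uniform_measure_def
    by (intro absolutely_continuousI_density borel_measurable_divide borel_measurable_indicator)
      simp_all
qed simp

definition square :: "real^'n \<Rightarrow> real \<Rightarrow> (real^'n) set" where
  "square c r = cbox (c - (\<chi> _. r)) (c + (\<chi> _. r))"

lemma mem_square: "x \<in> square c r \<longleftrightarrow> (\<forall>i. \<bar>x$i - c$i\<bar> \<le> r)"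
  unfolding square_def mem_box_cart by (auto simp: abs_le_iff algebra_simps)

lemma square_sets_borel [measurable]: "square c r \<in> sets borel"
  unfolding square_def by (simp add: borel_closed)

lemma emeasure_square_nonzero: "0 < r \<Longrightarrow> emeasure lborel (square c r) \<noteq> 0"
  unfolding square_def emeasure_lborel_cbox_eq
  by (auto simp: Basis_vec_def inner_axis ennreal_eq_0_iff not_le intro!: prod_pos)

lemma emeasure_square_finite: "emeasure lborel (square c r) \<noteq> \<infinity>"
  using emeasure_lborel_cbox_finite by (simp add: square_def less_top)

lemma measure_uniform_square:
  assumes "0 < r" "U \<in> sets borel"
  shows "measure (uniform_measure lborel (square c r)) U
    = measure lborel (square c r \<inter> U) / measure lborel (square c r)"
  using assms(2)
  by (intro measure_uniform_measure emeasure_square_nonzero emeasure_square_finite assms(1)) simp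

lemma measure_uniform_square_disjoint:
  "0 < r \<Longrightarrow> U \<in> sets borel \<Longrightarrow> square c r \<inter> U = {} \<Longrightarrow>
    measure (uniform_measure lborel (square c r)) U = 0"
  by (simp add: measure_uniform_square)

lemma measure_uniform_square_subset:
  assumes "0 < r" "U \<in> sets borel" "square c r \<subseteq> U"
  shows "measure (uniform_measure lborel (square c r)) U = 1"
proof -
  have "measure lborel (square c r) \<noteq> 0"
    unfolding measure_def enn2real_eq_0_iff
    using emeasure_square_nonzero[OF assms(1)] emeasure_square_finite by auto
  with assms show ?thesis
    by (simp add: measure_uniform_square Int_absorb2)
qed

lemma ac_prob_measure_uniform_square: "0 < r \<Longrightarrow> ac_prob_measure (uniform_measure lborel (square c r))"
  by (intro ac_prob_measure_uniform_measure square_sets_borel emeasure_square_nonzero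
      emeasure_square_finite)

definition orient :: "real^2 \<Rightarrow> real^2 \<Rightarrow> real^2 \<Rightarrow> real" where
  "orient a b c = (b$1 - a$1) * (c$2 - a$2) - (b$2 - a$2) * (c$1 - a$1)"

lemma orient_swap: "orient a c b = - orient a b c"
  unfolding orient_def by (simp add: algebra_simps)

text \<open>The barycentric coordinates of \<open>q\<close> with respect to \<open>x, y, z\<close> are the three orientations
  with \<open>q\<close> in place of one vertex, divided by \<open>orient x y z\<close> (Cramer's rule).\<close>
lemma convex_hull_3_if_orient_nonneg:
  assumes D: "0 < orient x y z"
    and "0 \<le> orient q y z" "0 \<le> orient x q z" "0 \<le> orient x y q"
  shows "q \<in> convex hull {x, y, z}"
proof -
  define u v w where "u = orient q y z / orient x y z" and "v = orient x q z / orient x y z"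
    and "w = orient x y q / orient x y z"
  have "orient q y z + orient x q z + orient x y q = orient x y z"
    unfolding orient_def by algebra
  then have sum: "u + v + w = 1"
    using D unfolding u_def v_def w_def by (simp add: add_divide_distrib[symmetric])
  have cramer: "orient q y z * x$k + orient x q z * y$k + orient x y q * z$k = orient x y z * q$k"
    for k
  proof -
    have "?thesis" if "k = 1" unfolding that orient_def by algebra
    moreover have "?thesis" if "k = 2" unfolding that orient_def by algebra
    ultimately show ?thesis using exhaust_2[of k] by blast
  qed
  have "(u *\<^sub>R x + v *\<^sub>R y + w *\<^sub>R z) $ k = q $ k" for k
    using cramer D unfolding u_def v_def w_def by (simp add: add_divide_distrib[symmetric])
  then have "q = u *\<^sub>R x + v *\<^sub>R y + w *\<^sub>R z"
    by (simp add: vec_eq_iff)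
  moreover have "0 \<le> u" "0 \<le> v" "0 \<le> w"
    using assms unfolding u_def v_def w_def by simp_all
  ultimately show ?thesis
    unfolding convex_hull_3 using sum by blast
qed

lemma convex_hull_3_if_orient_nonpos:
  assumes "orient x y z < 0"
    and "orient q y z \<le> 0" "orient x q z \<le> 0" "orient x y q \<le> 0"
  shows "q \<in> convex hull {x, y, z}"
proof -
  have "q \<in> convex hull {x, z, y}"
    using assms orient_swap[of x y z] orient_swap[of q y z] orient_swap[of x q z]
      orient_swap[of x y q]
    by (intro convex_hull_3_if_orient_nonneg) simp_all
  then show ?thesis
    by (simp add: insert_commute)
qed

lemma abs_mult_sub_le:
  fixes a b a' b' :: real
  assumes "\<bar>a'\<bar> \<le> B" "\<bar>b'\<bar> \<le> B" "\<bar>a - a'\<bar> \<le> e" "\<bar>b - b'\<bar> \<le> e"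
  shows "\<bar>a * b - a' * b'\<bar> \<le> 2 * B * e + e\<^sup>2"
proof -
  have "a * b - a' * b' = a' * (b - b') + (a - a') * b' + (a - a') * (b - b')"
    by (simp add: algebra_simps)
  also have "\<bar>\<dots>\<bar> \<le> \<bar>a'\<bar> * \<bar>b - b'\<bar> + \<bar>a - a'\<bar> * \<bar>b'\<bar> + \<bar>a - a'\<bar> * \<bar>b - b'\<bar>"
    unfolding abs_mult[symmetric]
    by (rule order_trans[OF abs_triangle_ineq add_right_mono[OF abs_triangle_ineq]])
  also have "\<dots> \<le> B * e + e * B + e * e"
    using assms by (intro add_mono mult_mono) auto
  finally show ?thesis
    by (simp add: power2_eq_square)
qed

lemma orient_perturb:
  assumes "\<forall>i. \<bar>x$i - a$i\<bar> \<le> e" "\<forall>i. \<bar>y$i - b$i\<bar> \<le> e" "\<forall>i. \<bar>z$i - c$i\<bar> \<le> e"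
    and "\<forall>i. \<bar>b$i - a$i\<bar> \<le> B" "\<forall>i. \<bar>c$i - a$i\<bar> \<le> B"
  shows "\<bar>orient x y z - orient a b c\<bar> \<le> 8 * B * e + 8 * e\<^sup>2"
proof -
  have dy: "\<bar>(y$i - x$i) - (b$i - a$i)\<bar> \<le> 2 * e" and dz: "\<bar>(z$i - x$i) - (c$i - a$i)\<bar> \<le> 2 * e"
    for i using assms(1-3)[rule_format, of i] by arith+
  have "\<bar>(y$1 - x$1) * (z$2 - x$2) - (b$1 - a$1) * (c$2 - a$2)\<bar> \<le> 2 * B * (2 * e) + (2 * e)\<^sup>2"
    "\<bar>(y$2 - x$2) * (z$1 - x$1) - (b$2 - a$2) * (c$1 - a$1)\<bar> \<le> 2 * B * (2 * e) + (2 * e)\<^sup>2"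
    using assms(4,5) dy dz by (intro abs_mult_sub_le; simp)+
  then show ?thesis
    unfolding orient_def power2_eq_square by arith
qed

lemma square_subset_convex_hull_3:
  fixes a b c d x y z :: "real^2" and B e :: real
  defines "\<delta> \<equiv> 8 * B * e + 8 * e\<^sup>2"
  assumes close: "\<And>u v i. u \<in> {a, b, c, d} \<Longrightarrow> v \<in> {a, b, c, d} \<Longrightarrow> \<bar>u$i - v$i\<bar> \<le> B"
    and sign: "(\<delta> < orient a b c \<and> \<delta> < orient d b c \<and> \<delta> < orient a d c \<and> \<delta> < orient a b d) \<or>
      (orient a b c < - \<delta> \<and> orient d b c < - \<delta> \<and> orient a d c < - \<delta> \<and> orient a b d < - \<delta>)"
    and "x \<in> square a e" "y \<in> square b e" "z \<in> square c e"
  shows "square d e \<subseteq> convex hull {x, y, z}"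
proof
  fix q assume "q \<in> square d e"
  then have near: "\<forall>i. \<bar>x$i - a$i\<bar> \<le> e" "\<forall>i. \<bar>y$i - b$i\<bar> \<le> e" "\<forall>i. \<bar>z$i - c$i\<bar> \<le> e"
    "\<forall>i. \<bar>q$i - d$i\<bar> \<le> e"
    using assms(4-6) by (simp_all add: mem_square)
  have "\<bar>orient x y z - orient a b c\<bar> \<le> \<delta>" "\<bar>orient q y z - orient d b c\<bar> \<le> \<delta>"
    "\<bar>orient x q z - orient a d c\<bar> \<le> \<delta>" "\<bar>orient x y q - orient a b d\<bar> \<le> \<delta>"
    unfolding \<delta>_def using near close by (intro orient_perturb; simp)+
  with sign show "q \<in> convex hull {x, y, z}"
    by (elim disjE conjE)
      (rule convex_hull_3_if_orient_nonneg convex_hull_3_if_orient_nonpos; arith)+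
qed

lemma subset_union_of_convex_if_monochromatic_hulls:
  fixes S :: "nat \<Rightarrow> 'a::real_vector set"
  assumes "convex A" "convex B"
    and meets: "\<And>j. j < m \<Longrightarrow> S j \<inter> (A \<union> B) \<noteq> {}"
    and bounded_indices: "\<And>i j k l. (i, j, k, l) \<in> T \<Longrightarrow> i < m \<and> j < m \<and> k < m \<and> l < m"
    and monochromatic: "\<And>col :: nat \<Rightarrow> bool. \<exists>(i, j, k, l) \<in> T. col i = col j \<and> col j = col k"
    and hulls: "\<And>i j k l x y z. (i, j, k, l) \<in> T \<Longrightarrow> x \<in> S i \<Longrightarrow> y \<in> S j \<Longrightarrow> z \<in> S k \<Longrightarrow>
      S l \<subseteq> convex hull {x, y, z}"
  shows "\<exists>l<m. S l \<subseteq> A \<union> B"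
proof -
  have "\<forall>j. \<exists>x. j < m \<longrightarrow> x \<in> S j \<inter> (A \<union> B)"
    using meets by blast
  then obtain p where p: "\<forall>j. j < m \<longrightarrow> p j \<in> S j \<inter> (A \<union> B)"
    by (rule choice[THEN exE])
  obtain i j k l where ijkl: "(i, j, k, l) \<in> T"
    and same: "(p i \<in> A) = (p j \<in> A)" "(p j \<in> A) = (p k \<in> A)"
    using monochromatic[of "\<lambda>j. p j \<in> A"] by blast
  have "i < m" "j < m" "k < m" "l < m"
    using bounded_indices[OF ijkl] by auto
  with p have pS: "p i \<in> S i" "p j \<in> S j" "p k \<in> S k"
    and pAB: "p i \<in> A \<union> B" "p j \<in> A \<union> B" "p k \<in> A \<union> B"
    by auto
  have "{p i, p j, p k} \<subseteq> A \<or> {p i, p j, p k} \<subseteq> B"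
    using same pAB by auto
  then have "convex hull {p i, p j, p k} \<subseteq> A \<or> convex hull {p i, p j, p k} \<subseteq> B"
    using \<open>convex A\<close> \<open>convex B\<close> by (meson hull_minimal)
  then show ?thesis
    using hulls[OF ijkl pS] \<open>l < m\<close> by blast
qed

lemma label_class_card_le:
  fixes lab :: "nat \<Rightarrow> nat"
  assumes "\<forall>i<n. lab i < 2"
  shows "\<exists>s<2. 2 * card {i. i < n \<and> lab i = s} \<le> n"
proof -
  have "{i. i < n \<and> lab i = 0} \<union> {i. i < n \<and> lab i = 1} = {..<n}"
    using assms by auto
  moreover have "{i. i < n \<and> lab i = 0} \<inter> {i. i < n \<and> lab i = 1} = {}"
    by auto
  ultimately have "card {i. i < n \<and> lab i = 0} + card {i. i < n \<and> lab i = 1} = n"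
    by (metis card_Un_disjoint card_lessThan finite_Collect_conjI finite_Collect_less_nat)
  then have "2 * card {i. i < n \<and> lab i = 0} \<le> n \<or> 2 * card {i. i < n \<and> lab i = 1} \<le> n"
    by linarith
  then show ?thesis
    by (auto intro: exI[of _ 0] exI[of _ 1])
qed

lemma finite_card_le_2_eq_doubleton:
  assumes "finite C" "C \<noteq> {}" "card C \<le> 2"
  obtains p q where "p \<in> C" "q \<in> C" "C = {p, q}"
proof -
  have "card C = 1 \<or> card C = 2"
    using assms card_0_eq by fastforce
  then show ?thesis
    using that by (auto simp: card_1_singleton_iff card_2_iff)
qed

definition center :: "nat \<Rightarrow> real^2" where
  "center j = [vector [2, 3], vector [4, 0], vector [1, 0], vector [5, 2],
               vector [3, 6], vector [4, 1], vector [1, 3], vector [2, 1]] ! j"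

text \<open>\<open>(i, j, k, l)\<close>: the triangle on the centers \<open>i, j, k\<close> contains the center \<open>l\<close>.\<close>
definition covering_triangles :: "(nat \<times> nat \<times> nat \<times> nat) list" where
  "covering_triangles =
    [(0,1,2,7), (1,3,4,5), (2,3,6,7), (2,4,5,7), (4,6,7,0), (1,3,7,5), (1,2,6,7), (0,2,3,7),
     (1,2,4,7), (1,3,6,5), (1,4,6,0), (2,3,4,7), (3,4,6,0)]"

lemma covering_triangles_less_8:
  "(i, j, k, l) \<in> set covering_triangles \<Longrightarrow> i < 8 \<and> j < 8 \<and> k < 8 \<and> l < 8"
  unfolding covering_triangles_def by auto

lemma covering_triangles_monochromatic:
  fixes col :: "nat \<Rightarrow> bool"
  shows "\<exists>(i, j, k, l) \<in> set covering_triangles. col i = col j \<and> col j = col k"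
  unfolding covering_triangles_def
  by (cases "col 0"; cases "col 1"; cases "col 2"; cases "col 3"; cases "col 4"; cases "col 5";
      cases "col 6"; cases "col 7"; simp)

lemma center_bounds: "j < 8 \<Longrightarrow> 0 \<le> center j $ i \<and> center j $ i \<le> 6"
  using exhaust_2[of i] unfolding center_def by (auto simp: less_Suc_eq numeral_eq_Suc)

lemma covering_triangles_orient:
  assumes "(i, j, k, l) \<in> set covering_triangles"
  shows "(1 \<le> orient (center i) (center j) (center k) \<and> 1 \<le> orient (center l) (center j) (center k) \<and>
          1 \<le> orient (center i) (center l) (center k) \<and> 1 \<le> orient (center i) (center j) (center l)) \<or>
         (orient (center i) (center j) (center k) \<le> -1 \<and> orient (center l) (center j) (center k) \<le> -1 \<and>
          orient (center i) (center l) (center k) \<le> -1 \<and> orient (center i) (center j) (center l) \<le> -1)"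
  using assms unfolding covering_triangles_def
  by (simp only: set_simps insert_iff empty_iff prod.inject)
    (elim disjE conjE FalseE; simp add: center_def orient_def)

lemma square_subset_covering_triangle:
  assumes "(i, j, k, l) \<in> set covering_triangles"
    and "x \<in> square (center i) (1/100)" "y \<in> square (center j) (1/100)" "z \<in> square (center k) (1/100)"
  shows "square (center l) (1/100) \<subseteq> convex hull {x, y, z}"
proof (rule square_subset_convex_hull_3[where B = 6])
  have "i < 8" "j < 8" "k < 8" "l < 8"
    using covering_triangles_less_8[OF assms(1)] by auto
  then have "0 \<le> w$t \<and> w$t \<le> 6" if "w \<in> {center i, center j, center k, center l}" for w t
    using that center_bounds by auto
  then show "\<bar>u$t - v$t\<bar> \<le> 6"
    if "u \<in> {center i, center j, center k, center l}" "v \<in> {center i, center j, center k, center l}" for u v t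
    using that by (smt (verit))
qed (use assms covering_triangles_orient[OF assms(1)] in \<open>auto simp: power2_eq_square\<close>)

definition square_measure :: "nat \<Rightarrow> (real^2) measure" where
  "square_measure j = uniform_measure lborel (square (center j) (1/100))"

lemma no_equipartition_of_square_measures:
  "\<not> (\<exists>K lab. convex_partition 5 K \<and> (\<forall>i<5. lab i < (2::nat)) \<and>
     (\<forall>j<Suc 7. \<forall>s<2. measure (square_measure j) (\<Union>i\<in>{i. i < 5 \<and> lab i = s}. K i) = 1 / real 2))"
proof (intro notI, elim exE conjE)
  fix K and lab :: "nat \<Rightarrow> nat"
  assume partition: "convex_partition 5 K" and "\<forall>i<5. lab i < 2" and halves:
    "\<forall>j<Suc 7. \<forall>s<2. measure (square_measure j) (\<Union>i\<in>{i. i < 5 \<and> lab i = s}. K i) = 1 / real 2"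
  then obtain s where "s < 2" and small: "2 * card {i. i < 5 \<and> lab i = s} \<le> 5"
    using label_class_card_le by blast
  define C where "C = {i. i < 5 \<and> lab i = s}"
  define U where "U = (\<Union>i\<in>C. K i)"
  have parts: "closed (K i)" "convex (K i)" if "i \<in> C" for i
    using partition that unfolding convex_partition_def C_def by auto
  have "U \<in> sets borel"
    unfolding U_def C_def using parts by (intro borel_closed closed_UN) (auto simp: C_def)
  have half: "measure (square_measure j) U = 1 / 2" if "j < 8" for j
    using halves that \<open>s < 2\<close> unfolding U_def C_def by (simp add: less_Suc_eq_le)
  have meets: "square (center j) (1/100) \<inter> U \<noteq> {}" if "j < 8" for j
    using half[OF that] measure_uniform_square_disjoint[OF _ \<open>U \<in> sets borel\<close>]
    unfolding square_measure_def by force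
  have "C \<noteq> {}"
    using meets[of 0] unfolding U_def by auto
  then obtain p q where "p \<in> C" "q \<in> C" "C = {p, q}"
    using small finite_card_le_2_eq_doubleton[of C] unfolding C_def by force
  then have U: "U = K p \<union> K q" and "convex (K p)" "convex (K q)"
    unfolding U_def using parts by auto
  have "\<exists>l<8. square (center l) (1/100) \<subseteq> K p \<union> K q"
    by (rule subset_union_of_convex_if_monochromatic_hulls[OF \<open>convex (K p)\<close> \<open>convex (K q)\<close>
          meets[unfolded U] covering_triangles_less_8 covering_triangles_monochromatic
          square_subset_covering_triangle])
  then obtain l where "l < 8" "square (center l) (1/100) \<subseteq> U"
    unfolding U by blast
  then have "measure (square_measure l) U = 1"
    unfolding square_measure_def using \<open>U \<in> sets borel\<close>
    by (simp add: measure_uniform_square_subset)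
  with half[OF \<open>l < 8\<close>] show False
    by simp
qed

theorem mainTheorem6:
  shows "M_val 5 2 TYPE(real^2) \<le> 7"
  using no_equipartition_of_square_measures
  by (intro M_val_le_if_not_equipartitioned[where \<mu> = square_measure])
    (simp_all add: square_measure_def ac_prob_measure_uniform_square)

end
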